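(* Let $N\geq2$, $\gamma\geq0$, $\alpha\in(0,1)$, $p>1$ with $2<p+1-\frac{2\gamma}{N-2\alpha}<\frac{2N}{N-2\alpha}$, and $(a,b)\in(0,\infty)\times[0,\infty)$. Then $$m_{a,b}=\inf\{H(\phi):\ 0\neq\phi\in H^\alpha_{rd},\ K(\phi)\leq0\}.$$
   Context: $H^\alpha_{rd}$ is the space of radial functions in the fractional Sobolev space $H^\alpha(\mathbb{R}^N)$ with norm $\|u\|_{H^\alpha}=(\|u\|_{L^2}^2+\|(-\Delta)^{\alpha/2}u\|_{L^2}^2)^{1/2}$. $S(\phi):=\frac12\|\phi\|_{H^\alpha}^2-\frac{1}{p+1}\int|x|^\gamma|\phi|^{p+1}dx$; for $\lambda>0$, $\phi^\lambda:=\lambda^a\phi(\cdot/\lambda^b)$; $K(\phi):=\partial_\lambda(S(\phi^\lambda))|_{\lambda=1}$; $H(\phi):=S(\phi)-\frac{1}{2a+Nb}K(\phi)$; $m_{a,b}:=\inf\{S(\phi):0\neq\phi\in H^\alpha_{rd},\ K(\phi)=0\}$. *)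

theory Defs
  imports "HOL-Analysis.Analysis"
begin

text \<open>Functions u : R^N -> C, with R^N an abstract euclidean space 'a, N = DIM('a).\<close>

definition frac_const :: "nat \<Rightarrow> real \<Rightarrow> real" where
  "frac_const N s = s * (2 powr (2 * s)) * Gamma ((real N + 2 * s)/2) / (pi powr (real N / 2) * Gamma (1 - s))"

definition L2_sq :: "('a::euclidean_space \<Rightarrow> complex) \<Rightarrow> ennreal" where
  "L2_sq u = (\<integral>\<^sup>+ x. ennreal ((cmod (u x))\<^sup>2) \<partial>lborel)"

definition gagliardo_sq :: "real \<Rightarrow> ('a::euclidean_space \<Rightarrow> complex) \<Rightarrow> ennreal" where
  "gagliardo_sq \<alpha> u = (\<integral>\<^sup>+ x. \<integral>\<^sup>+ y.
      ennreal ((cmod (u x - u y))\<^sup>2 / norm (x - y) powr (real DIM('a) + 2 * \<alpha>)) \<partial>lborel \<partial>lborel)"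

definition in_H :: "real \<Rightarrow> ('a::euclidean_space \<Rightarrow> complex) \<Rightarrow> bool" where
  "in_H \<alpha> u \<longleftrightarrow> u \<in> borel_measurable lborel \<and> L2_sq u < \<infinity> \<and> gagliardo_sq \<alpha> u < \<infinity>"

definition radial :: "('a::euclidean_space \<Rightarrow> complex) \<Rightarrow> bool" where
  "radial u \<longleftrightarrow> (\<forall>x y. norm x = norm y \<longrightarrow> u x = u y)"

definition in_H_rd :: "real \<Rightarrow> ('a::euclidean_space \<Rightarrow> complex) \<Rightarrow> bool" where
  "in_H_rd \<alpha> u \<longleftrightarrow> in_H \<alpha> u \<and> radial u"

text \<open>||(-Delta)^(alpha/2) u||_2^2 = C(N,alpha)/2 * Gagliardo seminorm squared.\<close>
definition frac_lap_sq :: "real \<Rightarrow> ('a::euclidean_space \<Rightarrow> complex) \<Rightarrow> real" where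
  "frac_lap_sq \<alpha> u = frac_const DIM('a) \<alpha> / 2 * enn2real (gagliardo_sq \<alpha> u)"

definition H_norm_sq :: "real \<Rightarrow> ('a::euclidean_space \<Rightarrow> complex) \<Rightarrow> real" where
  "H_norm_sq \<alpha> u = enn2real (L2_sq u) + frac_lap_sq \<alpha> u"

definition action :: "real \<Rightarrow> real \<Rightarrow> real \<Rightarrow> ('a::euclidean_space \<Rightarrow> complex) \<Rightarrow> real" where
  "action \<alpha> \<gamma> p u = H_norm_sq \<alpha> u / 2
     - 1 / (p + 1) * (\<integral>x. norm x powr \<gamma> * cmod (u x) powr (p + 1) \<partial>lborel)"

definition rescale :: "real \<Rightarrow> real \<Rightarrow> real \<Rightarrow> ('a::euclidean_space \<Rightarrow> complex) \<Rightarrow> ('a \<Rightarrow> complex)" where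
  "rescale a b t u = (\<lambda>x. complex_of_real (t powr a) * u ((1 / t powr b) *\<^sub>R x))"

definition Kfun :: "real \<Rightarrow> real \<Rightarrow> real \<Rightarrow> real \<Rightarrow> real \<Rightarrow> ('a::euclidean_space \<Rightarrow> complex) \<Rightarrow> real" where
  "Kfun \<alpha> \<gamma> p a b u = deriv (\<lambda>t. action \<alpha> \<gamma> p (rescale a b t u)) 1"

definition Hfun :: "real \<Rightarrow> real \<Rightarrow> real \<Rightarrow> real \<Rightarrow> real \<Rightarrow> ('a::euclidean_space \<Rightarrow> complex) \<Rightarrow> real" where
  "Hfun \<alpha> \<gamma> p a b u = action \<alpha> \<gamma> p u - 1 / (2 * a + real DIM('a) * b) * Kfun \<alpha> \<gamma> p a b u"

definition nonzero :: "('a::euclidean_space \<Rightarrow> complex) \<Rightarrow> bool" where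
  "nonzero u \<longleftrightarrow> \<not> (AE x in lborel. u x = 0)"

definition m_ab :: "'a::euclidean_space itself \<Rightarrow> real \<Rightarrow> real \<Rightarrow> real \<Rightarrow> real \<Rightarrow> real \<Rightarrow> real" where
  "m_ab _ \<alpha> \<gamma> p a b = Inf {action \<alpha> \<gamma> p u | u :: 'a \<Rightarrow> complex.
      in_H_rd \<alpha> u \<and> nonzero u \<and> Kfun \<alpha> \<gamma> p a b u = 0}"

end

theory Submission
  imports Defs
begin

(* Every term of the action scales by a pure power of t along u \<mapsto> u^t: the L^2 term by
   t^(2a+Nb), the Gagliardo term by t^(2a+(N-2\<alpha>)b) and the weighted L^(p+1) term by
   t^((p+1)a+(N+\<gamma>)b), the largest of the three exponents. So if K(u) < 0, then K(u^t) > 0 for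
   small t and the intermediate value theorem gives t in (0,1) with K(u^t) = 0. Eliminating the
   L^2 term, H is a nonnegative combination of the other two terms, whose exponents are
   nonnegative, so H(u^t) \<le> H(u); as H = S where K = 0, the two infima coincide. *)

lemma nn_integral_lborel_affine:
  fixes f :: "'a::euclidean_space \<Rightarrow> ennreal"
  assumes [measurable]: "f \<in> borel_measurable borel" and c: "c \<noteq> 0"
  shows "(\<integral>\<^sup>+x. f x \<partial>lborel) = ennreal (\<bar>c\<bar> ^ DIM('a)) * (\<integral>\<^sup>+x. f (t + c *\<^sub>R x) \<partial>lborel)"
  by (subst lborel_affine[OF c, of t]) (simp add: nn_integral_density nn_integral_distr nn_integral_cmult)

lemma nn_integral_lborel_dilate:
  fixes f :: "'a::euclidean_space \<Rightarrow> ennreal"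
  assumes "f \<in> borel_measurable borel" and s: "0 < s"
  shows "(\<integral>\<^sup>+x. f ((1/s) *\<^sub>R x) \<partial>lborel) = ennreal (s ^ DIM('a)) * (\<integral>\<^sup>+x. f x \<partial>lborel)"
proof -
  have "ennreal (s ^ DIM('a)) * (\<integral>\<^sup>+x. f x \<partial>lborel)
      = ennreal (s ^ DIM('a)) * ennreal ((1/s) ^ DIM('a)) * (\<integral>\<^sup>+x. f ((1/s) *\<^sub>R x) \<partial>lborel)"
    using nn_integral_lborel_affine[OF assms(1), of "1/s" 0] s by (simp add: mult.assoc)
  also have "ennreal (s ^ DIM('a)) * ennreal ((1/s) ^ DIM('a)) = 1"
    using s by (simp add: ennreal_mult''[symmetric] power_mult_distrib[symmetric])
  finally show ?thesis by simp
qed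

(* No integrability hypothesis is needed: if f is not integrable, both sides are 0. *)
lemma integral_lborel_dilate_nonneg:
  fixes f :: "'a::euclidean_space \<Rightarrow> real"
  assumes [measurable]: "f \<in> borel_measurable borel" and "\<And>x. 0 \<le> f x" and s: "0 < s"
  shows "(\<integral>x. f ((1/s) *\<^sub>R x) \<partial>lborel) = s ^ DIM('a) * (\<integral>x. f x \<partial>lborel)"
proof -
  have "(\<integral>x. f ((1/s) *\<^sub>R x) \<partial>lborel) = enn2real (\<integral>\<^sup>+x. ennreal (f ((1/s) *\<^sub>R x)) \<partial>lborel)"
    using assms(2) by (intro integral_eq_nn_integral) auto
  also have "\<dots> = enn2real (ennreal (s ^ DIM('a)) * (\<integral>\<^sup>+x. ennreal (f x) \<partial>lborel))"
    using s by (subst nn_integral_lborel_dilate) auto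
  also have "\<dots> = s ^ DIM('a) * (\<integral>x. f x \<partial>lborel)"
    using s assms(2) by (simp add: enn2real_mult integral_eq_nn_integral)
  finally show ?thesis .
qed

lemma power_combination_has_root:
  fixes A B C d e f :: real
  assumes "0 < A" and "0 \<le> B" and "e < f" and "A + B < C"
  shows "\<exists>t\<in>{0<..<1}. A * t powr e + B * t powr d - C * t powr f = 0"
proof -
  define g where "g t = A * t powr e + B * t powr d - C * t powr f" for t :: real
  have "((\<lambda>t. C * t powr (f - e)) \<longlongrightarrow> C * 0) (at_right 0)"
    using assms(3) eventually_at_right_less[of 0]
    by (intro tendsto_mult tendsto_const tendsto_zero_powrI) (auto elim: eventually_mono)
  then have "\<forall>\<^sub>F t in at_right 0. C * t powr (f - e) < A"
    using assms(1) by (auto dest: order_tendstoD(2))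
  then obtain \<epsilon> where "0 < \<epsilon>" and \<epsilon>: "\<And>t. 0 < t \<Longrightarrow> t < \<epsilon> \<Longrightarrow> C * t powr (f - e) < A"
    by (auto simp: eventually_at_right_field)
  define t0 where "t0 = min (\<epsilon> / 2) (1 / 2)"
  have t0: "0 < t0" "t0 < 1" "t0 < \<epsilon>" using \<open>0 < \<epsilon>\<close> by (auto simp: t0_def)
  have "0 < t0 powr e * (A - C * t0 powr (f - e))"
    using \<epsilon>[OF t0(1,3)] t0 by simp
  also have "\<dots> = A * t0 powr e - C * t0 powr f"
    using t0 by (simp add: algebra_simps flip: powr_add)
  finally have "0 < A * t0 powr e - C * t0 powr f" .
  moreover have "0 \<le> B * t0 powr d" using assms(2) by simp
  ultimately have "0 \<le> g t0" unfolding g_def by linarith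
  moreover have "g 1 \<le> 0" using assms(4) by (simp add: g_def)
  moreover have "\<forall>t. t0 \<le> t \<and> t \<le> 1 \<longrightarrow> isCont g t"
    using t0 unfolding g_def by (auto intro!: continuous_intros)
  ultimately obtain t where "t0 \<le> t" "t \<le> 1" "g t = 0"
    using IVT2[of g 1 0 t0] t0 by auto
  moreover have "t \<noteq> 1" using \<open>g t = 0\<close> assms(4) by (auto simp: g_def)
  ultimately show ?thesis using t0 unfolding g_def by auto
qed

lemma cInf_eq_of_dominated_subset:
  fixes S T :: "'a::conditionally_complete_lattice set"
  assumes "S \<subseteq> T" and "bdd_below T" and "\<And>y. y \<in> T \<Longrightarrow> \<exists>x\<in>S. x \<le> y"
  shows "Inf S = Inf T"
proof (cases "T = {}")
  case False
  with assms(3) have "S \<noteq> {}" by blast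
  show ?thesis
    using cInf_mono[OF False bdd_below_mono[OF assms(2,1)] assms(3)]
      cInf_superset_mono[OF \<open>S \<noteq> {}\<close> assms(2,1)]
    by (rule antisym)
qed (use assms(1) in simp)

lemma rescale_measurable [measurable]:
  assumes "u \<in> borel_measurable lborel"
  shows "rescale a b t u \<in> borel_measurable lborel"
  using assms unfolding rescale_def measurable_lborel1 by measurable

lemma radial_rescale: "radial u \<Longrightarrow> radial (rescale a b t u)"
  unfolding radial_def rescale_def by simp

definition weighted_power_integral :: "real \<Rightarrow> real \<Rightarrow> ('a::euclidean_space \<Rightarrow> complex) \<Rightarrow> real" where
  "weighted_power_integral \<gamma> p u = (\<integral>x. norm x powr \<gamma> * cmod (u x) powr (p + 1) \<partial>lborel)"

lemma weighted_power_integral_nonneg: "0 \<le> weighted_power_integral \<gamma> p u"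
  unfolding weighted_power_integral_def by (rule Bochner_Integration.integral_nonneg) simp

lemma L2_sq_rescale:
  fixes u :: "'a::euclidean_space \<Rightarrow> complex"
  assumes "u \<in> borel_measurable lborel" and t: "0 < t"
  shows "L2_sq (rescale a b t u) = ennreal (t powr (2 * a + real DIM('a) * b)) * L2_sq u"
proof -
  define s where "s = t powr b"
  have s: "0 < s" using t by (simp add: s_def)
  have [measurable]: "u \<in> borel_measurable borel" using assms(1) by (simp add: measurable_lborel1)
  have "L2_sq (rescale a b t u)
      = (\<integral>\<^sup>+x. ennreal ((t powr a)\<^sup>2) * ennreal ((cmod (u ((1/s) *\<^sub>R x)))\<^sup>2) \<partial>lborel)"
    by (simp add: L2_sq_def rescale_def s_def norm_mult power_mult_distrib ennreal_mult)
  also have "\<dots> = ennreal ((t powr a)\<^sup>2) * ennreal (s ^ DIM('a)) * L2_sq u"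
    unfolding L2_sq_def using s
    by (simp add: nn_integral_cmult nn_integral_lborel_dilate[where f="\<lambda>x. ennreal ((cmod (u x))\<^sup>2)"] mult.assoc)
  also have "ennreal ((t powr a)\<^sup>2) * ennreal (s ^ DIM('a)) = ennreal (t powr (2 * a + real DIM('a) * b))"
    using t s unfolding s_def
    by (simp add: ennreal_mult'' [symmetric] powr_realpow [symmetric] powr_powr powr_add [symmetric] algebra_simps)
  finally show ?thesis .
qed

lemma weighted_power_integral_rescale:
  fixes u :: "'a::euclidean_space \<Rightarrow> complex"
  assumes "u \<in> borel_measurable lborel" and t: "0 < t"
  shows "weighted_power_integral \<gamma> p (rescale a b t u)
       = t powr ((p + 1) * a + (real DIM('a) + \<gamma>) * b) * weighted_power_integral \<gamma> p u"
proof -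
  define s where "s = t powr b"
  have s: "0 < s" using t by (simp add: s_def)
  have [measurable]: "u \<in> borel_measurable borel" using assms(1) by (simp add: measurable_lborel1)
  define F where "F x = norm x powr \<gamma> * cmod (u x) powr (p + 1)" for x :: 'a
  have [measurable]: "F \<in> borel_measurable borel" unfolding F_def by measurable
  have "norm x powr \<gamma> * cmod (rescale a b t u x) powr (p + 1)
      = s powr \<gamma> * (t powr a) powr (p + 1) * F ((1/s) *\<^sub>R x)" for x
    using s by (simp add: F_def rescale_def s_def norm_mult powr_mult powr_divide)
  then have "weighted_power_integral \<gamma> p (rescale a b t u)
      = s powr \<gamma> * (t powr a) powr (p + 1) * (\<integral>x. F ((1/s) *\<^sub>R x) \<partial>lborel)"
    by (simp add: weighted_power_integral_def)
  also have "\<dots> = s powr \<gamma> * (t powr a) powr (p + 1) * s ^ DIM('a) * weighted_power_integral \<gamma> p u"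
    using s by (subst integral_lborel_dilate_nonneg) (auto simp: F_def [abs_def] weighted_power_integral_def)
  also have "s powr \<gamma> * (t powr a) powr (p + 1) * s ^ DIM('a) = t powr ((p + 1) * a + (real DIM('a) + \<gamma>) * b)"
    using t unfolding s_def
    by (simp add: powr_realpow [symmetric] powr_powr powr_add [symmetric] algebra_simps)
  finally show ?thesis .
qed

lemma gagliardo_sq_rescale:
  fixes u :: "'a::euclidean_space \<Rightarrow> complex"
  assumes "u \<in> borel_measurable lborel" and t: "0 < t"
  shows "gagliardo_sq \<alpha> (rescale a b t u)
       = ennreal (t powr (2 * a + (real DIM('a) - 2 * \<alpha>) * b)) * gagliardo_sq \<alpha> u"
proof -
  define s where "s = t powr b"
  have s: "0 < s" using t by (simp add: s_def)
  define q where "q = real DIM('a) + 2 * \<alpha>"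
  define C where "C = (t powr a)\<^sup>2 / s powr q"
  have [measurable]: "u \<in> borel_measurable borel" using assms(1) by (simp add: measurable_lborel1)
  define h where "h x y = ennreal ((cmod (u x - u y))\<^sup>2 / norm (x - y) powr q)" for x y :: 'a
  have h_measurable [measurable]: "(\<lambda>(x, y). h x y) \<in> borel_measurable (lborel \<Otimes>\<^sub>M lborel)"
    unfolding h_def by measurable
  have [measurable]: "h x \<in> borel_measurable borel" for x
    using measurable_Pair2[OF h_measurable, of x] by simp
  have pointwise: "ennreal ((cmod (rescale a b t u x - rescale a b t u y))\<^sup>2 / norm (x - y) powr q)
      = ennreal C * h ((1/s) *\<^sub>R x) ((1/s) *\<^sub>R y)" for x y
  proof -
    have "norm (x - y) powr q = s powr q * norm ((1/s) *\<^sub>R x - (1/s) *\<^sub>R y) powr q"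
      using s by (simp add: powr_divide flip: scaleR_diff_right)
    moreover have "(cmod (rescale a b t u x - rescale a b t u y))\<^sup>2
        = (t powr a)\<^sup>2 * (cmod (u ((1/s) *\<^sub>R x) - u ((1/s) *\<^sub>R y)))\<^sup>2"
      by (simp add: rescale_def s_def norm_mult power_mult_distrib flip: right_diff_distrib)
    ultimately show ?thesis
      using s by (simp add: h_def C_def ennreal_mult'' [symmetric])
  qed
  have inner: "(\<integral>\<^sup>+y. ennreal C * h ((1/s) *\<^sub>R x) ((1/s) *\<^sub>R y) \<partial>lborel)
      = ennreal C * ennreal (s ^ DIM('a)) * (\<integral>\<^sup>+y. h ((1/s) *\<^sub>R x) y \<partial>lborel)" for x
    using s by (simp add: nn_integral_cmult nn_integral_lborel_dilate mult.assoc)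
  have "gagliardo_sq \<alpha> (rescale a b t u)
      = (\<integral>\<^sup>+x. ennreal C * ennreal (s ^ DIM('a)) * (\<integral>\<^sup>+y. h ((1/s) *\<^sub>R x) y \<partial>lborel) \<partial>lborel)"
    unfolding gagliardo_sq_def q_def [symmetric] pointwise inner ..
  also have "\<dots> = ennreal C * ennreal (s ^ DIM('a)) * ennreal (s ^ DIM('a)) * gagliardo_sq \<alpha> u"
    using s unfolding gagliardo_sq_def q_def [symmetric] h_def [symmetric]
    by (simp add: nn_integral_cmult nn_integral_lborel_dilate[where f="\<lambda>x. \<integral>\<^sup>+y. h x y \<partial>lborel"] mult.assoc)
  also have "ennreal C * ennreal (s ^ DIM('a)) * ennreal (s ^ DIM('a))
      = ennreal (t powr (2 * a + (real DIM('a) - 2 * \<alpha>) * b))"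
    using t s unfolding C_def s_def q_def
    by (simp add: ennreal_mult'' [symmetric] powr_realpow [symmetric] powr_powr powr_add [symmetric]
        powr_diff [symmetric] algebra_simps)
  finally show ?thesis .
qed

lemma frac_lap_sq_rescale:
  fixes u :: "'a::euclidean_space \<Rightarrow> complex"
  assumes "u \<in> borel_measurable lborel" and "0 < t"
  shows "frac_lap_sq \<alpha> (rescale a b t u) = t powr (2 * a + (real DIM('a) - 2 * \<alpha>) * b) * frac_lap_sq \<alpha> u"
  using assms by (simp add: frac_lap_sq_def gagliardo_sq_rescale enn2real_mult)

lemma frac_const_nonneg:
  assumes "0 \<le> s" and "s < 1"
  shows "0 \<le> frac_const N s"
proof (cases "s = 0")
  case False
  with assms show ?thesis unfolding frac_const_def
    by (intro divide_nonneg_nonneg mult_nonneg_nonneg) (auto intro!: Gamma_real_nonneg)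
qed (simp add: frac_const_def)

lemma frac_lap_sq_nonneg:
  assumes "0 \<le> \<alpha>" and "\<alpha> < 1"
  shows "0 \<le> frac_lap_sq \<alpha> u"
  using frac_const_nonneg[OF assms] by (simp add: frac_lap_sq_def)

lemma action_altdef:
  "action \<alpha> \<gamma> p u = (enn2real (L2_sq u) + frac_lap_sq \<alpha> u) / 2 - weighted_power_integral \<gamma> p u / (p + 1)"
  by (simp add: action_def H_norm_sq_def weighted_power_integral_def)

lemma action_rescale:
  fixes u :: "'a::euclidean_space \<Rightarrow> complex"
  assumes "u \<in> borel_measurable lborel" and "0 < t"
  shows "action \<alpha> \<gamma> p (rescale a b t u)
       = (t powr (2 * a + real DIM('a) * b) * enn2real (L2_sq u)
          + t powr (2 * a + (real DIM('a) - 2 * \<alpha>) * b) * frac_lap_sq \<alpha> u) / 2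
         - t powr ((p + 1) * a + (real DIM('a) + \<gamma>) * b) * weighted_power_integral \<gamma> p u / (p + 1)"
  using assms
  by (simp add: action_altdef L2_sq_rescale frac_lap_sq_rescale weighted_power_integral_rescale enn2real_mult)

lemma Kfun_eq:
  fixes u :: "'a::euclidean_space \<Rightarrow> complex"
  assumes "u \<in> borel_measurable lborel"
  shows "Kfun \<alpha> \<gamma> p a b u
       = ((2 * a + real DIM('a) * b) * enn2real (L2_sq u)
          + (2 * a + (real DIM('a) - 2 * \<alpha>) * b) * frac_lap_sq \<alpha> u) / 2
         - ((p + 1) * a + (real DIM('a) + \<gamma>) * b) * weighted_power_integral \<gamma> p u / (p + 1)"
proof -
  define e1 e2 e3 where "e1 = 2 * a + real DIM('a) * b"
    and "e2 = 2 * a + (real DIM('a) - 2 * \<alpha>) * b" and "e3 = (p + 1) * a + (real DIM('a) + \<gamma>) * b"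
  define M D W where "M = enn2real (L2_sq u)" and "D = frac_lap_sq \<alpha> u"
    and "W = weighted_power_integral \<gamma> p u"
  have "eventually (\<lambda>t. t \<in> {0<..}) (nhds (1::real))"
    by (rule eventually_nhds_in_open) auto
  then have "eventually (\<lambda>t. action \<alpha> \<gamma> p (rescale a b t u)
      = (t powr e1 * M + t powr e2 * D) / 2 - t powr e3 * W / (p + 1)) (nhds 1)"
    by eventually_elim (simp_all add: action_rescale[OF assms] e1_def e2_def e3_def M_def D_def W_def)
  moreover have "((\<lambda>t. (t powr e1 * M + t powr e2 * D) / 2 - t powr e3 * W / (p + 1))
      has_real_derivative (e1 * M + e2 * D) / 2 - e3 * W / (p + 1)) (at 1)"
    by (cases "p + 1 = 0") (auto intro!: derivative_eq_intros)
  ultimately have "((\<lambda>t. action \<alpha> \<gamma> p (rescale a b t u))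
      has_real_derivative (e1 * M + e2 * D) / 2 - e3 * W / (p + 1)) (at 1)"
    by (subst DERIV_cong_ev[OF refl]) auto
  then show ?thesis
    unfolding Kfun_def e1_def e2_def e3_def M_def D_def W_def by (rule DERIV_imp_deriv)
qed

lemma Kfun_rescale:
  fixes u :: "'a::euclidean_space \<Rightarrow> complex"
  assumes "u \<in> borel_measurable lborel" and "0 < t"
  shows "Kfun \<alpha> \<gamma> p a b (rescale a b t u)
       = ((2 * a + real DIM('a) * b) * t powr (2 * a + real DIM('a) * b) * enn2real (L2_sq u)
          + (2 * a + (real DIM('a) - 2 * \<alpha>) * b) * t powr (2 * a + (real DIM('a) - 2 * \<alpha>) * b)
            * frac_lap_sq \<alpha> u) / 2
         - ((p + 1) * a + (real DIM('a) + \<gamma>) * b) * t powr ((p + 1) * a + (real DIM('a) + \<gamma>) * b)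
            * weighted_power_integral \<gamma> p u / (p + 1)"
  using assms
  by (simp add: Kfun_eq L2_sq_rescale frac_lap_sq_rescale weighted_power_integral_rescale enn2real_mult
      mult.assoc)

lemma Hfun_eq:
  fixes u :: "'a::euclidean_space \<Rightarrow> complex"
  assumes "u \<in> borel_measurable lborel" and e: "2 * a + real DIM('a) * b \<noteq> 0"
  shows "Hfun \<alpha> \<gamma> p a b u
       = \<alpha> * b / (2 * a + real DIM('a) * b) * frac_lap_sq \<alpha> u
         + ((p - 1) * a + \<gamma> * b) / ((p + 1) * (2 * a + real DIM('a) * b)) * weighted_power_integral \<gamma> p u"
  using e unfolding Hfun_def action_altdef Kfun_eq[OF assms(1)]
  by (simp add: divide_simps) (simp add: algebra_simps)

lemma nonzero_iff_L2_sq: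
  fixes u :: "'a::euclidean_space \<Rightarrow> complex"
  assumes "u \<in> borel_measurable lborel"
  shows "nonzero u \<longleftrightarrow> L2_sq u \<noteq> 0"
proof -
  have [measurable]: "u \<in> borel_measurable borel" using assms by (simp add: measurable_lborel1)
  have "L2_sq u = 0 \<longleftrightarrow> (AE x in lborel. ennreal ((cmod (u x))\<^sup>2) = 0)"
    unfolding L2_sq_def by (rule nn_integral_0_iff_AE) measurable
  then show ?thesis by (simp add: nonzero_def ennreal_eq_0_iff)
qed

lemma L2_sq_real_pos:
  assumes "in_H \<alpha> u" and "nonzero u"
  shows "0 < enn2real (L2_sq u)"
  using assms nonzero_iff_L2_sq[of u]
  by (simp add: in_H_def enn2real_positive_iff zero_less_iff_neq_zero)

lemma in_H_rd_rescale:
  fixes u :: "'a::euclidean_space \<Rightarrow> complex"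
  assumes "in_H_rd \<alpha> u" and "0 < t"
  shows "in_H_rd \<alpha> (rescale a b t u)"
  using assms rescale_measurable[of u a b t]
  by (simp add: in_H_rd_def in_H_def radial_rescale L2_sq_rescale gagliardo_sq_rescale ennreal_mult_less_top)

lemma nonzero_rescale:
  fixes u :: "'a::euclidean_space \<Rightarrow> complex"
  assumes "u \<in> borel_measurable lborel" and "nonzero u" and "0 < t"
  shows "nonzero (rescale a b t u)"
  using assms by (simp add: nonzero_iff_L2_sq L2_sq_rescale)

lemma Hfun_nonneg:
  fixes u :: "'a::euclidean_space \<Rightarrow> complex"
  assumes "u \<in> borel_measurable lborel"
    and "0 \<le> \<alpha>" "\<alpha> < 1" "0 \<le> \<gamma>" "1 \<le> p" "0 < a" "0 \<le> b"
  shows "0 \<le> Hfun \<alpha> \<gamma> p a b u"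
proof -
  have "0 < 2 * a + real DIM('a) * b" using assms(6,7) by (simp add: add_pos_nonneg)
  then show ?thesis
    using assms frac_lap_sq_nonneg[of \<alpha> u] weighted_power_integral_nonneg[of \<gamma> p u]
    by (simp add: Hfun_eq)
qed

lemma Hfun_rescale_le:
  fixes u :: "'a::euclidean_space \<Rightarrow> complex"
  assumes "u \<in> borel_measurable lborel"
    and "0 \<le> \<alpha>" "\<alpha> < 1" "2 * \<alpha> \<le> real DIM('a)" "0 \<le> \<gamma>" "1 \<le> p" "0 < a" "0 \<le> b"
    and "0 < t" "t \<le> 1"
  shows "Hfun \<alpha> \<gamma> p a b (rescale a b t u) \<le> Hfun \<alpha> \<gamma> p a b u"
proof -
  define e1 e2 e3 where "e1 = 2 * a + real DIM('a) * b"
    and "e2 = 2 * a + (real DIM('a) - 2 * \<alpha>) * b" and "e3 = (p + 1) * a + (real DIM('a) + \<gamma>) * b"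
  define D W where "D = frac_lap_sq \<alpha> u" and "W = weighted_power_integral \<gamma> p u"
  have "0 < e1" "0 \<le> e2" "0 \<le> e3"
    using assms(4-8) by (auto simp: e1_def e2_def e3_def add_pos_nonneg)
  have shrink: "t powr e * x \<le> x" if "0 \<le> e" "0 \<le> x" for e x
    using that assms(9,10) by (simp add: mult_left_le_one_le powr_le1)
  have "Hfun \<alpha> \<gamma> p a b (rescale a b t u)
      = \<alpha> * b / e1 * (t powr e2 * D) + ((p - 1) * a + \<gamma> * b) / ((p + 1) * e1) * (t powr e3 * W)"
    using assms(1,9) \<open>0 < e1\<close>
    by (simp add: Hfun_eq frac_lap_sq_rescale weighted_power_integral_rescale e1_def e2_def e3_def D_def W_def)
  also have "\<dots> \<le> \<alpha> * b / e1 * D + ((p - 1) * a + \<gamma> * b) / ((p + 1) * e1) * W"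
    using assms(2-8) \<open>0 < e1\<close> \<open>0 \<le> e2\<close> \<open>0 \<le> e3\<close>
      frac_lap_sq_nonneg[of \<alpha> u] weighted_power_integral_nonneg[of \<gamma> p u]
    by (intro add_mono mult_left_mono shrink) (auto simp: D_def W_def)
  also have "\<dots> = Hfun \<alpha> \<gamma> p a b u"
    using assms(1) \<open>0 < e1\<close> by (simp add: Hfun_eq e1_def D_def W_def)
  finally show ?thesis .
qed

lemma exists_rescale_Kfun_eq_0:
  fixes u :: "'a::euclidean_space \<Rightarrow> complex"
  assumes "in_H \<alpha> u" and "nonzero u"
    and "0 \<le> \<alpha>" "\<alpha> < 1" "2 * \<alpha> \<le> real DIM('a)" "0 \<le> \<gamma>" "1 < p" "0 < a" "0 \<le> b"
    and "Kfun \<alpha> \<gamma> p a b u < 0"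
  shows "\<exists>t\<in>{0<..<1}. Kfun \<alpha> \<gamma> p a b (rescale a b t u) = 0"
proof -
  define e1 e2 e3 where "e1 = 2 * a + real DIM('a) * b"
    and "e2 = 2 * a + (real DIM('a) - 2 * \<alpha>) * b" and "e3 = (p + 1) * a + (real DIM('a) + \<gamma>) * b"
  define M D W where "M = enn2real (L2_sq u)" and "D = frac_lap_sq \<alpha> u"
    and "W = weighted_power_integral \<gamma> p u"
  have u: "u \<in> borel_measurable lborel" using assms(1) by (simp add: in_H_def)
  have "0 < e1" "0 \<le> e2" using assms(5,8,9) by (auto simp: e1_def e2_def add_pos_nonneg)
  have "a < a * p" "0 \<le> \<gamma> * b" using assms(6-9) by simp_all
  then have "e1 < e3" by (simp add: e1_def e3_def algebra_simps)
  have "0 < M" using L2_sq_real_pos[OF assms(1,2)] by (simp add: M_def)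
  have "0 \<le> D" using frac_lap_sq_nonneg[OF assms(3,4)] by (simp add: D_def)
  have "e1 * M / 2 + e2 * D / 2 < e3 * W / (p + 1)"
    using assms(10) by (simp add: Kfun_eq[OF u] e1_def e2_def e3_def M_def D_def W_def add_divide_distrib)
  then obtain t where t: "t \<in> {0<..<1}"
    and root: "e1 * M / 2 * t powr e1 + e2 * D / 2 * t powr e2 - e3 * W / (p + 1) * t powr e3 = 0"
    using power_combination_has_root[of "e1 * M / 2" "e2 * D / 2" e1 e3 "e3 * W / (p + 1)" e2]
      \<open>0 < e1\<close> \<open>0 \<le> e2\<close> \<open>e1 < e3\<close> \<open>0 < M\<close> \<open>0 \<le> D\<close>
    by auto
  have "Kfun \<alpha> \<gamma> p a b (rescale a b t u)
      = (e1 * t powr e1 * M + e2 * t powr e2 * D) / 2 - e3 * t powr e3 * W / (p + 1)"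
    using t by (simp add: Kfun_rescale[OF u] e1_def e2_def e3_def M_def D_def W_def)
  also have "\<dots> = 0"
    using root assms(7) by (simp add: field_simps)
  finally show ?thesis using t by auto
qed

lemma action_eq_Hfun: "Kfun \<alpha> \<gamma> p a b u = 0 \<Longrightarrow> action \<alpha> \<gamma> p u = Hfun \<alpha> \<gamma> p a b u"
  by (simp add: Hfun_def)

lemma exists_Kfun_eq_0_action_le_Hfun:
  fixes u :: "'a::euclidean_space \<Rightarrow> complex"
  assumes "in_H_rd \<alpha> u" and "nonzero u"
    and "0 \<le> \<alpha>" "\<alpha> < 1" "2 * \<alpha> \<le> real DIM('a)" "0 \<le> \<gamma>" "1 < p" "0 < a" "0 \<le> b"
    and "Kfun \<alpha> \<gamma> p a b u \<le> 0"
  shows "\<exists>v :: 'a \<Rightarrow> complex. in_H_rd \<alpha> v \<and> nonzero v \<and> Kfun \<alpha> \<gamma> p a b v = 0 \<and> action \<alpha> \<gamma> p v \<le> Hfun \<alpha> \<gamma> p a b u"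
proof (cases "Kfun \<alpha> \<gamma> p a b u = 0")
  case True
  with assms(1,2) show ?thesis by (auto simp: action_eq_Hfun)
next
  case False
  have u: "in_H \<alpha> u" "u \<in> borel_measurable lborel" using assms(1) by (simp_all add: in_H_rd_def in_H_def)
  obtain t where t: "0 < t" "t < 1" and K: "Kfun \<alpha> \<gamma> p a b (rescale a b t u) = 0"
    using exists_rescale_Kfun_eq_0[OF u(1) assms(2-9)] False assms(10) by auto
  have "action \<alpha> \<gamma> p (rescale a b t u) = Hfun \<alpha> \<gamma> p a b (rescale a b t u)"
    using K by (rule action_eq_Hfun)
  also have "\<dots> \<le> Hfun \<alpha> \<gamma> p a b u"
    using Hfun_rescale_le[OF u(2) assms(3-6) _ assms(8,9)] assms(7) t by simp
  finally show ?thesis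
    using K t assms(1,2) u(2) by (blast intro: in_H_rd_rescale nonzero_rescale)
qed

theorem lemma7p4:
  fixes \<alpha> \<gamma> p a b :: real
  assumes "DIM('a::euclidean_space) \<ge> 2"
    and "\<gamma> \<ge> 0" and "0 < \<alpha>" and "\<alpha> < 1" and "p > 1"
    and "2 < p + 1 - 2 * \<gamma> / (real DIM('a) - 2 * \<alpha>)"
    and "p + 1 - 2 * \<gamma> / (real DIM('a) - 2 * \<alpha>) < 2 * real DIM('a) / (real DIM('a) - 2 * \<alpha>)"
    and "a > 0" and "b \<ge> 0"
  shows "m_ab TYPE('a) \<alpha> \<gamma> p a b =
         Inf {Hfun \<alpha> \<gamma> p a b u | u :: 'a \<Rightarrow> complex.
                in_H_rd \<alpha> u \<and> nonzero u \<and> Kfun \<alpha> \<gamma> p a b u \<le> 0}"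
proof -
  have par: "0 \<le> \<alpha>" "\<alpha> < 1" "2 * \<alpha> \<le> real DIM('a)" "0 \<le> \<gamma>" "1 < p" "0 < a" "0 \<le> b"
    using assms(1-5,8,9) by auto
  show ?thesis
    unfolding m_ab_def
  proof (rule cInf_eq_of_dominated_subset)
    show "{action \<alpha> \<gamma> p u | u :: 'a \<Rightarrow> complex. in_H_rd \<alpha> u \<and> nonzero u \<and> Kfun \<alpha> \<gamma> p a b u = 0}
        \<subseteq> {Hfun \<alpha> \<gamma> p a b u | u :: 'a \<Rightarrow> complex. in_H_rd \<alpha> u \<and> nonzero u \<and> Kfun \<alpha> \<gamma> p a b u \<le> 0}"
      by (auto simp: action_eq_Hfun)
    show "bdd_below {Hfun \<alpha> \<gamma> p a b u | u :: 'a \<Rightarrow> complex. in_H_rd \<alpha> u \<and> nonzero u \<and> Kfun \<alpha> \<gamma> p a b u \<le> 0}"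
      using par by (intro bdd_belowI[of _ 0]) (auto simp: in_H_rd_def in_H_def intro!: Hfun_nonneg)
  qed (use exists_Kfun_eq_0_action_le_Hfun[OF _ _ par] in blast)
qed

end
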